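(* Let $k_1,k_3,a_2,a_5$ be real constants with $(a_2,a_5)\neq(0,0)$, let $r=\sqrt{x^2+y^2}$, and consider the Newtonian system $\ddot x=-\partial_x V_5$, $\ddot y=-\partial_y V_5$ on the region where $r\neq 0$ and $a_2y-a_5x\neq0$, with potential $$V_5=\frac{k_1}{(a_2y-a_5x)^2}+\frac{k_3(a_2x+a_5y)}{r(a_2y-a_5x)^2}.$$ Let \begin{align*} \tilde J_3=&(x\dot y-y\dot x)^2(a_2\dot x+a_5\dot y)+\frac{2k_1r^2}{(a_2y-a_5x)^2}(a_2\dot x+a_5\dot y)+\frac{k_3r}{a_2y-a_5x}(a_2\dot y-a_5\dot x)\\ &-\frac{k_3(a_2x+a_5y)}{r(a_2y-a_5x)}(x\dot y-y\dot x)+\frac{2k_3(a_2x+a_5y)r}{(a_2y-a_5x)^2}(a_2\dot x+a_5\dot y). \end{align*} Then the time-dependent function $$J_5=-t\,\tilde J_3+(a_2x+a_5y)(x\dot y-y\dot x)^2+\frac{2k_1r^2(a_2x+a_5y)}{(a_2y-a_5x)^2}+\frac{2k_3r(a_2x+a_5y)^2}{(a_2y-a_5x)^2}+k_3r$$ is constant along every solution (as is $\tilde J_3$). *)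

theory Defs
  imports "HOL-Analysis.Analysis"
begin

definition rad :: "real \<Rightarrow> real \<Rightarrow> real" where
  "rad x y = sqrt (x^2 + y^2)"

definition V5 :: "real \<Rightarrow> real \<Rightarrow> real \<Rightarrow> real \<Rightarrow> real \<Rightarrow> real \<Rightarrow> real" where
  "V5 k1 k3 a2 a5 x y =
     k1 / (a2*y - a5*x)^2 + k3 * (a2*x + a5*y) / (rad x y * (a2*y - a5*x)^2)"

definition J3t :: "real \<Rightarrow> real \<Rightarrow> real \<Rightarrow> real \<Rightarrow> real \<Rightarrow> real \<Rightarrow> real \<Rightarrow> real \<Rightarrow> real" where
  "J3t k1 k3 a2 a5 x y xd yd =
     (x*yd - y*xd)^2 * (a2*xd + a5*yd)
     + 2*k1*(rad x y)^2 / (a2*y - a5*x)^2 * (a2*xd + a5*yd)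
     + k3 * rad x y / (a2*y - a5*x) * (a2*yd - a5*xd)
     - k3 * (a2*x + a5*y) / (rad x y * (a2*y - a5*x)) * (x*yd - y*xd)
     + 2*k3*(a2*x + a5*y) * rad x y / (a2*y - a5*x)^2 * (a2*xd + a5*yd)"

definition J5 :: "real \<Rightarrow> real \<Rightarrow> real \<Rightarrow> real \<Rightarrow> real \<Rightarrow> real \<Rightarrow> real \<Rightarrow> real \<Rightarrow> real \<Rightarrow> real" where
  "J5 k1 k3 a2 a5 t x y xd yd =
     - t * J3t k1 k3 a2 a5 x y xd yd
     + (a2*x + a5*y) * (x*yd - y*xd)^2
     + 2*k1*(rad x y)^2*(a2*x + a5*y) / (a2*y - a5*x)^2
     + 2*k3*rad x y*(a2*x + a5*y)^2 / (a2*y - a5*x)^2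
     + k3 * rad x y"

end

theory Submission
  imports Defs
begin

text \<open>Pass to the rotated coordinates \<open>s = a2 x + a5 y\<close>, \<open>d = a2 y - a5 x\<close>, with velocities
  \<open>p = s'\<close>, \<open>q = d'\<close> and angular momentum \<open>L = x y' - y x'\<close>. Along a solution of Newton's
  equations for \<open>V5\<close>, the derivatives \<open>p'\<close>, \<open>q'\<close>, \<open>L'\<close> are explicit rational functions of
  \<open>s\<close>, \<open>d\<close> and \<open>r\<close> (e.g. \<open>p' = -k3/r\<^sup>3\<close>), and \<open>r' = (s p + d q)/((a2\<^sup>2 + a5\<^sup>2) r)\<close>.
  In these variables one checks by direct differentiation that \<open>J3t\<close> has derivative zero and
  that the time-independent part \<open>K\<close> of \<open>J5 = -t J3t + K\<close> has derivative \<open>J3t\<close>, so that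
  \<open>J5' = -J3t - t J3t' + K' = 0\<close>.\<close>

lemma has_real_derivative_rad[derivative_intros]:
  assumes f: "(f has_real_derivative f') (at t within S)"
    and g: "(g has_real_derivative g') (at t within S)"
    and nz: "rad (f t) (g t) \<noteq> 0"
    and D: "D = (f t * f' + g t * g') / rad (f t) (g t)"
  shows "((\<lambda>t. rad (f t) (g t)) has_real_derivative D) (at t within S)"
proof -
  have pos: "f t ^ 2 + g t ^ 2 > 0"
    using nz unfolding rad_def by (metis add_nonneg_nonneg less_eq_real_def real_sqrt_zero zero_le_power2)
  have sum_sq: "((\<lambda>t. f t ^ 2 + g t ^ 2) has_real_derivative 2 * f t * f' + 2 * g t * g') (at t within S)"
    by (auto intro!: derivative_eq_intros f g)
  have "inverse (sqrt (f t ^ 2 + g t ^ 2)) / 2 * (2 * f t * f' + 2 * g t * g') = D"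
    using nz pos unfolding D rad_def by (simp add: field_simps)
  then show ?thesis
    unfolding rad_def using DERIV_chain2[OF DERIV_real_sqrt[OF pos] sum_sq] by simp
qed

lemma rad_power2: "(rad x y)\<^sup>2 = x\<^sup>2 + y\<^sup>2"
  unfolding rad_def by simp

text \<open>The radius is a separate argument \<open>r\<close>, so that the identities below become
  polynomial identities modulo \<open>r\<^sup>2 = x\<^sup>2 + y\<^sup>2\<close>.\<close>

definition V5_x :: "real \<Rightarrow> real \<Rightarrow> real \<Rightarrow> real \<Rightarrow> real \<Rightarrow> real \<Rightarrow> real \<Rightarrow> real" where
  "V5_x k1 k3 a2 a5 x y r = 2*k1*a5/(a2*y - a5*x)^3
     + k3 * (a2/(r*(a2*y - a5*x)^2) - (a2*x + a5*y)*x/(r^3*(a2*y - a5*x)^2)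
             + 2*a5*(a2*x + a5*y)/(r*(a2*y - a5*x)^3))"

definition V5_y :: "real \<Rightarrow> real \<Rightarrow> real \<Rightarrow> real \<Rightarrow> real \<Rightarrow> real \<Rightarrow> real \<Rightarrow> real" where
  "V5_y k1 k3 a2 a5 x y r = -2*k1*a2/(a2*y - a5*x)^3
     + k3 * (a5/(r*(a2*y - a5*x)^2) - (a2*x + a5*y)*y/(r^3*(a2*y - a5*x)^2)
             - 2*a2*(a2*x + a5*y)/(r*(a2*y - a5*x)^3))"

lemma has_real_derivative_V5_x:
  assumes "rad x y \<noteq> 0" and "a2*y - a5*x \<noteq> 0"
  shows "((\<lambda>u. V5 k1 k3 a2 a5 u y) has_real_derivative V5_x k1 k3 a2 a5 x y (rad x y)) (at x)"
proof -
  have "a2*y \<noteq> a5*x" using assms(2) by simp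
  show ?thesis
    unfolding V5_def V5_x_def
    apply (rule derivative_eq_intros refl | (simp add: assms \<open>a2*y \<noteq> a5*x\<close>; fail))+
    using assms by (simp add: field_simps) algebra
qed

lemma has_real_derivative_V5_y:
  assumes "rad x y \<noteq> 0" and "a2*y - a5*x \<noteq> 0"
  shows "((\<lambda>v. V5 k1 k3 a2 a5 x v) has_real_derivative V5_y k1 k3 a2 a5 x y (rad x y)) (at y)"
proof -
  have "a2*y \<noteq> a5*x" using assms(2) by simp
  show ?thesis
    unfolding V5_def V5_y_def
    apply (rule derivative_eq_intros refl | (simp add: assms \<open>a2*y \<noteq> a5*x\<close>; fail))+
    using assms by (simp add: field_simps) algebra
qed

lemma V5_force_s_component:
  fixes x y r :: real
  assumes "r \<noteq> 0" and "a2*y - a5*x \<noteq> 0" and r2: "r\<^sup>2 = x\<^sup>2 + y\<^sup>2"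
  shows "a2 * - V5_x k1 k3 a2 a5 x y r + a5 * - V5_y k1 k3 a2 a5 x y r = - k3 / r^3"
proof -
  obtain d where d: "a2*y - a5*x = d" by simp
  show ?thesis
    unfolding V5_x_def V5_y_def d using assms d
    apply (simp add: field_simps)
    using r2 d by algebra
qed

lemma V5_force_d_component:
  fixes x y r :: real
  assumes "r \<noteq> 0" and "a2*y - a5*x \<noteq> 0" and r2: "r\<^sup>2 = x\<^sup>2 + y\<^sup>2"
  shows "a2 * - V5_y k1 k3 a2 a5 x y r - a5 * - V5_x k1 k3 a2 a5 x y r =
     2*k1*(a2\<^sup>2 + a5\<^sup>2)/(a2*y - a5*x)^3 + k3*(a2*x + a5*y)/(r^3*(a2*y - a5*x))
       + 2*(a2\<^sup>2 + a5\<^sup>2)*k3*(a2*x + a5*y)/(r*(a2*y - a5*x)^3)"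
proof -
  obtain d where d: "a2*y - a5*x = d" by simp
  show ?thesis
    unfolding V5_x_def V5_y_def d using assms d
    apply (simp add: field_simps)
    using r2 d by algebra
qed

lemma V5_torque:
  fixes x y r :: real
  assumes "r \<noteq> 0" and "a2*y - a5*x \<noteq> 0" and r2: "r\<^sup>2 = x\<^sup>2 + y\<^sup>2"
  shows "x * - V5_y k1 k3 a2 a5 x y r - y * - V5_x k1 k3 a2 a5 x y r =
     2*k1*(a2*x + a5*y)/(a2*y - a5*x)^3 + k3/(r*(a2*y - a5*x))
       + 2*k3*(a2*x + a5*y)^2/(r*(a2*y - a5*x)^3)"
proof -
  obtain d where d: "a2*y - a5*x = d" by simp
  show ?thesis
    unfolding V5_x_def V5_y_def d using assms d
    apply (simp add: field_simps)
    using r2 d by algebra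
qed

definition J3_reduced :: "real \<Rightarrow> real \<Rightarrow> real \<Rightarrow> real \<Rightarrow> real \<Rightarrow> real \<Rightarrow> real \<Rightarrow> real \<Rightarrow> real" where
  "J3_reduced k1 k3 L p q s d r =
     L^2 * p + 2*k1*r^2/d^2 * p + k3*r/d * q - k3 * s/(r*d) * L + 2*k3 * s * r/d^2 * p"

definition J5_static :: "real \<Rightarrow> real \<Rightarrow> real \<Rightarrow> real \<Rightarrow> real \<Rightarrow> real \<Rightarrow> real" where
  "J5_static k1 k3 L s d r = s * L^2 + 2*k1*r^2 * s/d^2 + 2*k3*r * s^2/d^2 + k3*r"

lemma J3t_eq_J3_reduced:
  "J3t k1 k3 a2 a5 x y xd yd =
     J3_reduced k1 k3 (x*yd - y*xd) (a2*xd + a5*yd) (a2*yd - a5*xd) (a2*x + a5*y) (a2*y - a5*x) (rad x y)"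
  unfolding J3t_def J3_reduced_def by simp

lemma J5_eq_J3t_J5_static:
  "J5 k1 k3 a2 a5 t x y xd yd =
     - t * J3t k1 k3 a2 a5 x y xd yd + J5_static k1 k3 (x*yd - y*xd) (a2*x + a5*y) (a2*y - a5*x) (rad x y)"
  unfolding J5_def J5_static_def by simp

text \<open>\<open>A\<close> plays the role of \<open>a2\<^sup>2 + a5\<^sup>2\<close>.\<close>

locale reduced_flow_at =
  fixes k1 k3 A t :: real and L p q s d r :: "real \<Rightarrow> real"
  assumes L_deriv: "(L has_real_derivative
      2*k1 * s t/d t^3 + k3/(r t * d t) + 2*k3 * s t^2/(r t * d t^3)) (at t)"
    and p_deriv: "(p has_real_derivative - k3/r t^3) (at t)"
    and q_deriv: "(q has_real_derivative
      2*k1*A/d t^3 + k3 * s t/(r t^3 * d t) + 2*A*k3 * s t/(r t * d t^3)) (at t)"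
    and s_deriv: "(s has_real_derivative p t) (at t)"
    and d_deriv: "(d has_real_derivative q t) (at t)"
    and r_deriv: "(r has_real_derivative (s t * p t + d t * q t)/(A * r t)) (at t)"
    and r_nz: "r t \<noteq> 0" and d_nz: "d t \<noteq> 0" and A_nz: "A \<noteq> 0"
    and angular_momentum: "A * L t = s t * q t - d t * p t"
    and radius: "A * (r t)\<^sup>2 = (s t)\<^sup>2 + (d t)\<^sup>2"
begin

lemma has_real_derivative_J3_reduced:
  "((\<lambda>t. J3_reduced k1 k3 (L t) (p t) (q t) (s t) (d t) (r t)) has_real_derivative 0) (at t)"
  unfolding J3_reduced_def
  apply (rule derivative_eq_intros refl L_deriv p_deriv q_deriv s_deriv d_deriv r_deriv
      | (simp add: r_nz d_nz; fail))+
  using r_nz d_nz A_nz apply (simp add: field_simps)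
  using angular_momentum radius by algebra

lemma has_real_derivative_J5_static:
  "((\<lambda>t. J5_static k1 k3 (L t) (s t) (d t) (r t))
     has_real_derivative J3_reduced k1 k3 (L t) (p t) (q t) (s t) (d t) (r t)) (at t)"
  unfolding J3_reduced_def J5_static_def
  apply (rule derivative_eq_intros refl L_deriv p_deriv q_deriv s_deriv d_deriv r_deriv
      | (simp add: r_nz d_nz; fail))+
  using r_nz d_nz A_nz apply (simp add: field_simps)
  using angular_momentum radius by algebra

end

lemma newton_V5_reduced_flow_at:
  fixes x y xd yd xdd ydd :: "real \<Rightarrow> real"
  assumes a_nz: "(a2, a5) \<noteq> (0, 0)"
    and r_nz: "rad (x t) (y t) \<noteq> 0" and d_nz: "a2 * y t - a5 * x t \<noteq> 0"
    and dx: "(x has_real_derivative xd t) (at t)"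
    and dy: "(y has_real_derivative yd t) (at t)"
    and dxd: "(xd has_real_derivative xdd t) (at t)"
    and dyd: "(yd has_real_derivative ydd t) (at t)"
    and xdd: "xdd t = - V5_x k1 k3 a2 a5 (x t) (y t) (rad (x t) (y t))"
    and ydd: "ydd t = - V5_y k1 k3 a2 a5 (x t) (y t) (rad (x t) (y t))"
  shows "reduced_flow_at k1 k3 (a2\<^sup>2 + a5\<^sup>2) t (\<lambda>t. x t * yd t - y t * xd t)
     (\<lambda>t. a2 * xd t + a5 * yd t) (\<lambda>t. a2 * yd t - a5 * xd t)
     (\<lambda>t. a2 * x t + a5 * y t) (\<lambda>t. a2 * y t - a5 * x t) (\<lambda>t. rad (x t) (y t))"
proof
  note r2 = rad_power2[of "x t" "y t"]
  show "a2\<^sup>2 + a5\<^sup>2 \<noteq> 0" using a_nz by (auto simp: sum_power2_eq_zero_iff)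
  show "((\<lambda>t. a2 * xd t + a5 * yd t) has_real_derivative - k3 / (rad (x t) (y t))^3) (at t)"
    using V5_force_s_component[OF r_nz d_nz r2, of k1 k3]
    by (auto intro!: derivative_eq_intros dxd dyd simp: xdd ydd mult.commute)
  show "((\<lambda>t. a2 * yd t - a5 * xd t) has_real_derivative
       2*k1*(a2\<^sup>2 + a5\<^sup>2)/(a2 * y t - a5 * x t)^3
       + k3*(a2 * x t + a5 * y t)/((rad (x t) (y t))^3*(a2 * y t - a5 * x t))
       + 2*(a2\<^sup>2 + a5\<^sup>2)*k3*(a2 * x t + a5 * y t)/((rad (x t) (y t))*(a2 * y t - a5 * x t)^3)) (at t)"
    using V5_force_d_component[OF r_nz d_nz r2, of k1 k3]
    by (auto intro!: derivative_eq_intros dxd dyd simp: xdd ydd mult.commute)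
  show "((\<lambda>t. x t * yd t - y t * xd t) has_real_derivative
       2*k1*(a2 * x t + a5 * y t)/(a2 * y t - a5 * x t)^3 + k3/((rad (x t) (y t))*(a2 * y t - a5 * x t))
       + 2*k3*(a2 * x t + a5 * y t)^2/((rad (x t) (y t))*(a2 * y t - a5 * x t)^3)) (at t)"
    using V5_torque[OF r_nz d_nz r2, of k1 k3]
    by (auto intro!: derivative_eq_intros dx dy dxd dyd simp: xdd ydd algebra_simps)
  have rad_numerator: "(a2 * x t + a5 * y t) * (a2 * xd t + a5 * yd t) + (a2 * y t - a5 * x t) * (a2 * yd t - a5 * xd t)
      = (a2\<^sup>2 + a5\<^sup>2) * (x t * xd t + y t * yd t)"
    by (simp add: algebra_simps power2_eq_square)
  have "(x t * xd t + y t * yd t) / rad (x t) (y t) =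
     ((a2 * x t + a5 * y t) * (a2 * xd t + a5 * yd t) + (a2 * y t - a5 * x t) * (a2 * yd t - a5 * xd t))
       / ((a2\<^sup>2 + a5\<^sup>2) * rad (x t) (y t))"
    unfolding rad_numerator using \<open>a2\<^sup>2 + a5\<^sup>2 \<noteq> 0\<close> by auto
  then show "((\<lambda>t. rad (x t) (y t)) has_real_derivative
     ((a2 * x t + a5 * y t) * (a2 * xd t + a5 * yd t) + (a2 * y t - a5 * x t) * (a2 * yd t - a5 * xd t))
       / ((a2\<^sup>2 + a5\<^sup>2) * rad (x t) (y t))) (at t)"
    using has_real_derivative_rad[OF dx dy r_nz refl] by simp
  show "(a2\<^sup>2 + a5\<^sup>2) * (x t * yd t - y t * xd t)
      = (a2 * x t + a5 * y t) * (a2 * yd t - a5 * xd t) - (a2 * y t - a5 * x t) * (a2 * xd t + a5 * yd t)"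
    by (simp add: algebra_simps power2_eq_square)
  show "(a2\<^sup>2 + a5\<^sup>2) * (rad (x t) (y t))\<^sup>2 = (a2 * x t + a5 * y t)\<^sup>2 + (a2 * y t - a5 * x t)\<^sup>2"
    unfolding r2 by (simp add: algebra_simps power2_eq_square)
qed (use r_nz d_nz in \<open>auto intro!: derivative_eq_intros dx dy\<close>)

lemma newton_V5_first_integrals_deriv:
  fixes x y xd yd xdd ydd :: "real \<Rightarrow> real"
  assumes a_nz: "(a2, a5) \<noteq> (0, 0)"
    and r_nz: "rad (x t) (y t) \<noteq> 0" and d_nz: "a2 * y t - a5 * x t \<noteq> 0"
    and dx: "(x has_real_derivative xd t) (at t)"
    and dy: "(y has_real_derivative yd t) (at t)"
    and dxd: "(xd has_real_derivative xdd t) (at t)"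
    and dyd: "(yd has_real_derivative ydd t) (at t)"
    and eqx: "((\<lambda>u. V5 k1 k3 a2 a5 u (y t)) has_real_derivative (- xdd t)) (at (x t))"
    and eqy: "((\<lambda>v. V5 k1 k3 a2 a5 (x t) v) has_real_derivative (- ydd t)) (at (y t))"
  shows "((\<lambda>t. J3t k1 k3 a2 a5 (x t) (y t) (xd t) (yd t)) has_real_derivative 0) (at t)"
    and "((\<lambda>t. J5 k1 k3 a2 a5 t (x t) (y t) (xd t) (yd t)) has_real_derivative 0) (at t)"
proof -
  have "xdd t = - V5_x k1 k3 a2 a5 (x t) (y t) (rad (x t) (y t))"
    using DERIV_unique[OF eqx has_real_derivative_V5_x[OF r_nz d_nz]] by simp
  moreover have "ydd t = - V5_y k1 k3 a2 a5 (x t) (y t) (rad (x t) (y t))"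
    using DERIV_unique[OF eqy has_real_derivative_V5_y[OF r_nz d_nz]] by simp
  ultimately interpret reduced_flow_at k1 k3 "a2\<^sup>2 + a5\<^sup>2" t "\<lambda>t. x t * yd t - y t * xd t"
      "\<lambda>t. a2 * xd t + a5 * yd t" "\<lambda>t. a2 * yd t - a5 * xd t"
      "\<lambda>t. a2 * x t + a5 * y t" "\<lambda>t. a2 * y t - a5 * x t" "\<lambda>t. rad (x t) (y t)"
    by (rule newton_V5_reduced_flow_at[where xd = xd and yd = yd and xdd = xdd and ydd = ydd,
          OF a_nz r_nz d_nz dx dy dxd dyd])
  show J3t_deriv: "((\<lambda>t. J3t k1 k3 a2 a5 (x t) (y t) (xd t) (yd t)) has_real_derivative 0) (at t)"
    unfolding J3t_eq_J3_reduced by (rule has_real_derivative_J3_reduced)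
  have static_deriv: "((\<lambda>t. J5_static k1 k3 (x t * yd t - y t * xd t) (a2 * x t + a5 * y t)
      (a2 * y t - a5 * x t) (rad (x t) (y t))) has_real_derivative J3t k1 k3 a2 a5 (x t) (y t) (xd t) (yd t)) (at t)"
    unfolding J3t_eq_J3_reduced by (rule has_real_derivative_J5_static)
  show "((\<lambda>t. J5 k1 k3 a2 a5 t (x t) (y t) (xd t) (yd t)) has_real_derivative 0) (at t)"
    unfolding J5_eq_J3t_J5_static by (rule derivative_eq_intros refl J3t_deriv static_deriv | simp)+
qed

theorem mainTheorem7:
  fixes k1 k3 a2 a5 :: real
    and I :: "real set"
    and x y xd yd xdd ydd :: "real \<Rightarrow> real"
  assumes a_nz: "(a2, a5) \<noteq> (0, 0)"
    and I_open: "open I" and I_conn: "connected I"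
    and region: "\<And>t. t \<in> I \<Longrightarrow> rad (x t) (y t) \<noteq> 0 \<and> a2 * y t - a5 * x t \<noteq> 0"
    and dx: "\<And>t. t \<in> I \<Longrightarrow> (x has_real_derivative xd t) (at t)"
    and dy: "\<And>t. t \<in> I \<Longrightarrow> (y has_real_derivative yd t) (at t)"
    and dxd: "\<And>t. t \<in> I \<Longrightarrow> (xd has_real_derivative xdd t) (at t)"
    and dyd: "\<And>t. t \<in> I \<Longrightarrow> (yd has_real_derivative ydd t) (at t)"
    and eqx: "\<And>t. t \<in> I \<Longrightarrow>
              ((\<lambda>u. V5 k1 k3 a2 a5 u (y t)) has_real_derivative (- xdd t)) (at (x t))"
    and eqy: "\<And>t. t \<in> I \<Longrightarrow>
              ((\<lambda>v. V5 k1 k3 a2 a5 (x t) v) has_real_derivative (- ydd t)) (at (y t))"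
  shows "(\<exists>c. \<forall>t\<in>I. J5 k1 k3 a2 a5 t (x t) (y t) (xd t) (yd t) = c)
       \<and> (\<exists>c. \<forall>t\<in>I. J3t k1 k3 a2 a5 (x t) (y t) (xd t) (yd t) = c)"
proof -
  have J5_deriv: "((\<lambda>t. J5 k1 k3 a2 a5 t (x t) (y t) (xd t) (yd t)) has_real_derivative 0) (at t)"
    and J3t_deriv: "((\<lambda>t. J3t k1 k3 a2 a5 (x t) (y t) (xd t) (yd t)) has_real_derivative 0) (at t)"
    if "t \<in> I" for t
    using newton_V5_first_integrals_deriv[where xd = xd and yd = yd and xdd = xdd and ydd = ydd,
        OF a_nz _ _ dx dy dxd dyd eqx eqy] region that by auto
  have "(\<lambda>t. J5 k1 k3 a2 a5 t (x t) (y t) (xd t) (yd t)) constant_on I"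
    using J5_deriv by (rule has_field_derivative_0_imp_constant_on[OF _ I_conn I_open])
  moreover have "(\<lambda>t. J3t k1 k3 a2 a5 (x t) (y t) (xd t) (yd t)) constant_on I"
    using J3t_deriv by (rule has_field_derivative_0_imp_constant_on[OF _ I_conn I_open])
  ultimately show ?thesis
    unfolding constant_on_def by blast
qed

end
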